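(* Let $\alpha,\beta$ be sets and $\odot:\beta\times\beta\to\beta$. Calls $\mathrm{reduceByKey}(\odot,\mathit{pairRdd})$ (with pair RDDs over $\alpha\times\beta$) have deterministic outcomes if and only if calls $\mathrm{reduce}(\odot,\mathit{rdd})$ (with RDDs over $\beta$) have deterministic outcomes.
   Context: Lists are finite; $\mathbin{+\!\!+}$ is concatenation. $\mathrm{foldl}(f,b,[\,])=b$, $\mathrm{foldl}(f,b,[x_1,\dots,x_n])=f(\cdots f(f(b,x_1),x_2)\cdots,x_n)$; $\mathrm{reducel}(f,[x_1,\dots,x_n])=\mathrm{foldl}(f,x_1,[x_2,\dots,x_n])$ for nonempty lists. An RDD over $X$ is a list of lists over $X$; a pair RDD is an RDD over $\alpha\times\beta$ (key, value). A partitioning is a function $P$ sending each list $L$ to an RDD obtained by splitting $L$ into consecutive pieces $p_1,\dots,p_n$ with $p_1\mathbin{+\!\!+}\cdots\mathbin{+\!\!+}p_n=L$ and then arbitrarily permuting $[p_1,\dots,p_n]$ (for $\mathrm{reduce}$, $L$ is nonempty and all pieces are nonempty). $\mathrm{filterkey}(k,L)$ is the list of values $v$ of the pairs $(k,v)$ in $L$, in order. $\mathrm{reduce}_{\mathrm{det}}(\odot,[q_1,\dots,q_m])=\mathrm{reducel}(\odot,[\mathrm{reducel}(\odot,q_1),\dots,\mathrm{reducel}(\odot,q_m)])$; calls to $\mathrm{reduce}$ have deterministic outcomes if $\mathrm{reduce}_{\mathrm{det}}(\odot,P(L))=\mathrm{reducel}(\odot,L)$ for all nonempty $L$ over $\beta$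 and all such partitionings $P$. $\mathrm{reduceByKey}_{\mathrm{det}}(\odot,[q_1,\dots,q_m])$ is a pair RDD in which each key $k$ occurring in some $q_i$ appears exactly once, with value $\mathrm{reducel}(\odot,[c_{i_1},\dots,c_{i_r}])$, where $i_1<\dots<i_r$ are the indices $i$ with $k$ occurring in $q_i$ and $c_i=\mathrm{reducel}(\odot,\mathrm{filterkey}(k,q_i))$; $\mathrm{lookup}(k,R)$ denotes the value associated with key $k$ in the pair RDD $R$. Calls $\mathrm{reduceByKey}(\odot,\mathit{pairRdd})$ have deterministic outcomes if $\mathrm{lookup}(k,\mathrm{reduceByKey}_{\mathrm{det}}(\odot,P(L)))=\mathrm{reducel}(\odot,\mathrm{filterkey}(k,L))$ for all lists $L$ of pairs, partitionings $P$, and keys $k$ occurring in $L$. *)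

theory Defs
  imports "HOL-Library.Multiset"
begin

definition reducel :: "('b \<Rightarrow> 'b \<Rightarrow> 'b) \<Rightarrow> 'b list \<Rightarrow> 'b" where
  "reducel f xs = foldl f (hd xs) (tl xs)"

definition partitioning :: "('x list \<Rightarrow> 'x list list) \<Rightarrow> bool" where
  "partitioning P \<longleftrightarrow> (\<forall>L. \<exists>ps. concat ps = L \<and> mset (P L) = mset ps)"

definition reduce_partitioning :: "('x list \<Rightarrow> 'x list list) \<Rightarrow> bool" where
  "reduce_partitioning P \<longleftrightarrow>
     (\<forall>L. L \<noteq> [] \<longrightarrow> (\<exists>ps. concat ps = L \<and> (\<forall>p\<in>set ps. p \<noteq> []) \<and> mset (P L) = mset ps))"

definition reduce_det :: "('b \<Rightarrow> 'b \<Rightarrow> 'b) \<Rightarrow> 'b list list \<Rightarrow> 'b" where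
  "reduce_det f qs = reducel f (map (reducel f) qs)"

definition filterkey :: "'a \<Rightarrow> ('a \<times> 'b) list \<Rightarrow> 'b list" where
  "filterkey k L = map snd (filter (\<lambda>p. fst p = k) L)"

text \<open>The value associated with key k in reduceByKey_det f qs (for k occurring in some q_i).\<close>
definition lookup_reduceByKey_det :: "'a \<Rightarrow> ('b \<Rightarrow> 'b \<Rightarrow> 'b) \<Rightarrow> ('a \<times> 'b) list list \<Rightarrow> 'b" where
  "lookup_reduceByKey_det k f qs =
     reducel f (map (\<lambda>q. reducel f (filterkey k q)) (filter (\<lambda>q. k \<in> fst ` set q) qs))"

definition reduce_deterministic :: "('b \<Rightarrow> 'b \<Rightarrow> 'b) \<Rightarrow> bool" where
  "reduce_deterministic f \<longleftrightarrow>
     (\<forall>P :: 'b list \<Rightarrow> 'b list list. reduce_partitioning P \<longrightarrow>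
        (\<forall>L. L \<noteq> [] \<longrightarrow> reduce_det f (P L) = reducel f L))"

definition reduceByKey_deterministic ::
  "'a itself \<Rightarrow> ('b \<Rightarrow> 'b \<Rightarrow> 'b) \<Rightarrow> bool" where
  "reduceByKey_deterministic _ f \<longleftrightarrow>
     (\<forall>P :: ('a \<times> 'b) list \<Rightarrow> ('a \<times> 'b) list list. partitioning P \<longrightarrow>
        (\<forall>L k. k \<in> fst ` set L \<longrightarrow>
           lookup_reduceByKey_det k f (P L) = reducel f (filterkey k L)))"

end

theory Submission
  imports Defs
begin

text \<open>Both properties quantify over all partitionings, but a partitioning only matters on the one
list it is applied to. So reduce is deterministic iff reducing the pieces of any split of a
nonempty list into nonempty pieces, in any order, gives the reduction of the list. A reduceByKey
call for key k is exactly such a reduce on the pieces filterkey k q of the partitions containing k;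
conversely, a reduce is the reduceByKey of the list tagged with a single key.\<close>

definition partition_at :: "'x list \<Rightarrow> 'x list list \<Rightarrow> 'x list \<Rightarrow> 'x list list" where
  "partition_at L qs = (\<lambda>L'. if L' = L then qs else [L'])"

lemma partitioning_partition_at:
  assumes "concat ps = L" and "mset qs = mset ps"
  shows "partitioning (partition_at L qs)"
  unfolding partitioning_def partition_at_def
proof
  fix L' :: "'a list"
  show "\<exists>ps. concat ps = L' \<and> mset (if L' = L then qs else [L']) = mset ps"
    using assms by (cases "L' = L") (auto intro: exI[of _ "[L']"])
qed

lemma reduce_partitioning_partition_at:
  assumes "concat ps = L" and "\<forall>p\<in>set ps. p \<noteq> []" and "mset qs = mset ps"
  shows "reduce_partitioning (partition_at L qs)"
  unfolding reduce_partitioning_def partition_at_def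
proof (intro allI impI)
  fix L' :: "'a list"
  assume "L' \<noteq> []"
  then show "\<exists>ps. concat ps = L' \<and> (\<forall>p\<in>set ps. p \<noteq> []) \<and>
      mset (if L' = L then qs else [L']) = mset ps"
    using assms by (cases "L' = L") (auto intro: exI[of _ "[L']"])
qed

lemma reduce_deterministic_iff:
  "reduce_deterministic f \<longleftrightarrow>
     (\<forall>ps qs. concat ps \<noteq> [] \<longrightarrow> (\<forall>p\<in>set ps. p \<noteq> []) \<longrightarrow> mset qs = mset ps \<longrightarrow>
        reduce_det f qs = reducel f (concat ps))"
proof
  assume det: "reduce_deterministic f"
  show "\<forall>ps qs. concat ps \<noteq> [] \<longrightarrow> (\<forall>p\<in>set ps. p \<noteq> []) \<longrightarrow> mset qs = mset ps \<longrightarrow>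
      reduce_det f qs = reducel f (concat ps)"
  proof (intro allI impI)
    fix ps qs :: "'a list list"
    assume "concat ps \<noteq> []" "\<forall>p\<in>set ps. p \<noteq> []" "mset qs = mset ps"
    then have "reduce_det f (partition_at (concat ps) qs (concat ps)) = reducel f (concat ps)"
      using det reduce_partitioning_partition_at unfolding reduce_deterministic_def by blast
    then show "reduce_det f qs = reducel f (concat ps)"
      by (simp add: partition_at_def)
  qed
next
  assume "\<forall>ps qs. concat ps \<noteq> [] \<longrightarrow> (\<forall>p\<in>set ps. p \<noteq> []) \<longrightarrow> mset qs = mset ps \<longrightarrow>
      reduce_det f qs = reducel f (concat ps)"
  then show "reduce_deterministic f"
    unfolding reduce_deterministic_def reduce_partitioning_def by metis
qed

lemma lookup_reduceByKey_det_eq_reduce_det: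
  "lookup_reduceByKey_det k f qs =
     reduce_det f (map (filterkey k) (filter (\<lambda>q. k \<in> fst ` set q) qs))"
  by (simp add: lookup_reduceByKey_det_def reduce_det_def comp_def)

lemma filterkey_concat: "filterkey k (concat ps) = concat (map (filterkey k) ps)"
  by (induction ps) (auto simp: filterkey_def)

lemma filterkey_eq_Nil_iff: "filterkey k q = [] \<longleftrightarrow> k \<notin> fst ` set q"
  by (auto simp: filterkey_def filter_empty_conv)

lemma concat_map_filterkey_filter_key_occurs:
  "concat (map (filterkey k) (filter (\<lambda>q. k \<in> fst ` set q) ps)) = concat (map (filterkey k) ps)"
  by (induction ps) (auto simp: filterkey_eq_Nil_iff)

lemma filterkey_map_Pair: "filterkey k (map (Pair k) q) = q"
  by (induction q) (auto simp: filterkey_def)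

lemma reduceByKey_deterministic_if_reduce_deterministic:
  assumes "reduce_deterministic f"
  shows "reduceByKey_deterministic TYPE('a) f"
  unfolding reduceByKey_deterministic_def
proof (intro allI impI)
  fix P :: "('a \<times> 'b) list \<Rightarrow> ('a \<times> 'b) list list" and L :: "('a \<times> 'b) list" and k
  assume "partitioning P" and k: "k \<in> fst ` set L"
  then obtain ps where ps: "concat ps = L" "mset (P L) = mset ps"
    unfolding partitioning_def by blast
  let ?pieces = "\<lambda>qs. map (filterkey k) (filter (\<lambda>q. k \<in> fst ` set q) qs)"
  have "concat (?pieces ps) = filterkey k L"
    by (simp add: concat_map_filterkey_filter_key_occurs filterkey_concat flip: ps(1))
  moreover have "filterkey k L \<noteq> []" and "\<forall>p\<in>set (?pieces ps). p \<noteq> []"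
    using k by (auto simp: filterkey_eq_Nil_iff)
  moreover have "mset (?pieces (P L)) = mset (?pieces ps)"
    by (simp add: ps(2))
  ultimately have "reduce_det f (?pieces (P L)) = reducel f (filterkey k L)"
    using assms unfolding reduce_deterministic_iff by metis
  then show "lookup_reduceByKey_det k f (P L) = reducel f (filterkey k L)"
    by (simp add: lookup_reduceByKey_det_eq_reduce_det)
qed

lemma reduce_deterministic_if_reduceByKey_deterministic:
  assumes det: "reduceByKey_deterministic TYPE('a) f"
  shows "reduce_deterministic f"
  unfolding reduce_deterministic_iff
proof (intro allI impI)
  fix ps qs :: "'b list list"
  assume ne: "concat ps \<noteq> []" and pieces_ne: "\<forall>p\<in>set ps. p \<noteq> []" and perm: "mset qs = mset ps"
  define k :: 'a where "k = undefined"
  let ?tag = "map (Pair k)"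
  have "partitioning (partition_at (?tag (concat ps)) (map ?tag qs))"
    by (rule partitioning_partition_at[of "map ?tag ps"]) (simp_all add: map_concat perm)
  moreover have "k \<in> fst ` set (?tag (concat ps))"
    using ne by (cases "concat ps") auto
  ultimately have "lookup_reduceByKey_det k f (map ?tag qs) = reducel f (concat ps)"
    using det unfolding reduceByKey_deterministic_def
    by (metis partition_at_def filterkey_map_Pair)
  moreover have "\<forall>q\<in>set qs. q \<noteq> []"
    using pieces_ne perm by (metis set_mset_mset)
  then have "filter (\<lambda>q. k \<in> fst ` set q) (map ?tag qs) = map ?tag qs"
    by (intro filter_True) (auto simp: neq_Nil_conv)
  ultimately show "reduce_det f qs = reducel f (concat ps)"
    by (simp add: lookup_reduceByKey_det_eq_reduce_det comp_def filterkey_map_Pair)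
qed

theorem proposition4:
  fixes f :: "'b \<Rightarrow> 'b \<Rightarrow> 'b"
  shows "reduceByKey_deterministic TYPE('a) f \<longleftrightarrow> reduce_deterministic f"
  using reduceByKey_deterministic_if_reduce_deterministic
    reduce_deterministic_if_reduceByKey_deterministic by blast

end
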